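(* Let $\mathcal{G}=(I,E)$ be a finite, simple, undirected, connected graph, let $Q\in\mathbb{R}_+^{I\times I}$ with $Q_{ij}>0$ if $\{i,j\}\in E$ and $Q_{ij}=0$ otherwise, and let $\mathbf{q}\in\mathbb{R}_+^I$ be not identically zero. Let $\mathcal{M}_\mathcal{G}=(\vec E,\Phi)$ be the message digraph of $\mathcal{G}$ and define $\boldsymbol{\alpha}\in\mathbb{R}_+^{\vec E}$ by $\alpha_{hk}=q_k/Q_{kh}$ for every $hk\in\vec E$. Then, for every $ji\in\vec E$ belonging to a non-trivial strongly connected component of $\mathcal{M}_\mathcal{G}$, there exists $hk\in\vec E$ reachable from $ji$ in $\mathcal{M}_\mathcal{G}$ such that $\alpha_{hk}>0$.
   Context: The message digraph $\mathcal{M}_\mathcal{G}=(\vec E,\Phi)$ has node set $\vec E=\{ji:=(j,i):\{i,j\}\in E\}$ (ordered pairs of adjacent vertices) and arc set $\Phi=\{(ji,hk): \{i,j\},\{k,h\}\in E,\ i=h,\ j\neq k\}$, i.e. there is an arc from $ji$ to $ik$ whenever $\{i,j\},\{i,k\}\in E$ and $k\neq j$. In a digraph, $w$ is reachable from $v$ if there is a directed path (possibly of length $0$) from $v$ to $w$; a strongly connected component is a maximal induced subdigraph in which all nodes are mutually reachable, and it is non-trivial unless it consists of a single node without a self-loop. *)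

theory Defs
  imports Complex_Main
begin

definition simple_graph :: "'a set \<Rightarrow> 'a set set \<Rightarrow> bool" where
  "simple_graph I E \<longleftrightarrow> finite I \<and> (\<forall>e\<in>E. \<exists>i j. e = {i, j} \<and> i \<in> I \<and> j \<in> I \<and> i \<noteq> j)"

definition adj :: "'a set set \<Rightarrow> ('a \<times> 'a) set" where
  "adj E = {(i, j). {i, j} \<in> E}"

definition connected_graph :: "'a set \<Rightarrow> 'a set set \<Rightarrow> bool" where
  "connected_graph I E \<longleftrightarrow> I \<noteq> {} \<and> (\<forall>i\<in>I. \<forall>j\<in>I. (i, j) \<in> (adj E)\<^sup>*)"

definition msg_nodes :: "'a set set \<Rightarrow> ('a \<times> 'a) set" where
  "msg_nodes E = {(j, i). {i, j} \<in> E}"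

definition msg_arcs :: "'a set set \<Rightarrow> (('a \<times> 'a) \<times> ('a \<times> 'a)) set" where
  "msg_arcs E = {((j, i), (h, k)). {i, j} \<in> E \<and> {k, h} \<in> E \<and> i = h \<and> j \<noteq> k}"

definition reachable :: "('v \<times> 'v) set \<Rightarrow> 'v \<Rightarrow> 'v \<Rightarrow> bool" where
  "reachable R v w \<longleftrightarrow> (v, w) \<in> R\<^sup>*"

definition scc_of :: "('v \<times> 'v) set \<Rightarrow> 'v \<Rightarrow> 'v set" where
  "scc_of R v = {w. reachable R v w \<and> reachable R w v}"

definition in_nontrivial_scc :: "('v \<times> 'v) set \<Rightarrow> 'v \<Rightarrow> bool" where
  "in_nontrivial_scc R v \<longleftrightarrow> \<not> (scc_of R v = {v} \<and> (v, v) \<notin> R)"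


definition msg_alpha :: "('a \<Rightarrow> 'a \<Rightarrow> real) \<Rightarrow> ('a \<Rightarrow> real) \<Rightarrow> 'a \<times> 'a \<Rightarrow> real" where
  "msg_alpha Q q hk = (case hk of (h, k) \<Rightarrow> q k / Q k h)"

end

theory Submission
  imports Defs
begin

text \<open>If the message ji lies on a cycle of the message digraph, every message hx reachable
from it is entered by an arc from a reachable message ph. Hence the set of receivers of
messages reachable from ji is closed under adjacency: from hx one reaches xy for every
neighbour y \<noteq> h of x, and the remaining neighbour h is the receiver of ph. By connectivity
every vertex, in particular one with q > 0, is such a receiver, and the message hk delivering
to it has alpha_hk = q_k / Q_kh > 0.\<close>

lemma in_nontrivial_scc_imp_trancl:
  assumes "in_nontrivial_scc R v"
  shows "(v, v) \<in> R\<^sup>+"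
proof (cases "(v, v) \<in> R")
  case False
  with assms have "scc_of R v \<noteq> {v}" by (simp add: in_nontrivial_scc_def)
  moreover have "v \<in> scc_of R v" by (simp add: scc_of_def reachable_def)
  ultimately obtain w where "w \<noteq> v" "(v, w) \<in> R\<^sup>*" "(w, v) \<in> R\<^sup>*"
    by (auto simp: scc_of_def reachable_def)
  then show ?thesis by (metis rtrancl_eq_or_trancl rtrancl_trancl_trancl)
qed auto

lemma msg_arcs_iff:
  "((a, b), (c, d)) \<in> msg_arcs E \<longleftrightarrow> {b, a} \<in> E \<and> {d, c} \<in> E \<and> b = c \<and> a \<noteq> d"
  by (auto simp: msg_arcs_def)

lemma reachable_from_cycle_has_pred:
  assumes cycle: "(v, v) \<in> (msg_arcs E)\<^sup>+"
    and reach: "reachable (msg_arcs E) v (h, x)"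
  shows "\<exists>p. reachable (msg_arcs E) v (p, h) \<and> {x, h} \<in> E"
proof -
  have "(v, (h, x)) \<in> (msg_arcs E)\<^sup>+"
    using cycle reach by (simp add: reachable_def trancl_rtrancl_trancl)
  then obtain u where "(v, u) \<in> (msg_arcs E)\<^sup>*" "(u, (h, x)) \<in> msg_arcs E"
    by (meson tranclD2)
  then show ?thesis
    by (cases u) (auto simp: msg_arcs_iff reachable_def)
qed

definition msg_receivers :: "'a set set \<Rightarrow> 'a \<times> 'a \<Rightarrow> 'a set" where
  "msg_receivers E v = {k. \<exists>h. reachable (msg_arcs E) v (h, k)}"

lemma msg_receivers_adj_closed:
  assumes cycle: "(v, v) \<in> (msg_arcs E)\<^sup>+"
    and x: "x \<in> msg_receivers E v" and xy: "{x, y} \<in> E"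
  shows "y \<in> msg_receivers E v"
proof -
  from x obtain h where hx: "reachable (msg_arcs E) v (h, x)"
    by (auto simp: msg_receivers_def)
  obtain p where ph: "reachable (msg_arcs E) v (p, h)" and "{x, h} \<in> E"
    using reachable_from_cycle_has_pred[OF cycle hx] by blast
  show ?thesis
  proof (cases "y = h")
    case True
    with ph show ?thesis by (auto simp: msg_receivers_def)
  next
    case False
    with \<open>{x, h} \<in> E\<close> xy have "((h, x), (x, y)) \<in> msg_arcs E"
      by (simp add: msg_arcs_iff insert_commute)
    with hx have "reachable (msg_arcs E) v (x, y)"
      unfolding reachable_def by (rule rtrancl_into_rtrancl)
    then show ?thesis by (auto simp: msg_receivers_def)
  qed
qed

lemma adj_rtrancl_closed:
  assumes "(i, v) \<in> (adj E)\<^sup>*" and "i \<in> S"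
    and "\<And>x y. x \<in> S \<Longrightarrow> {x, y} \<in> E \<Longrightarrow> y \<in> S"
  shows "v \<in> S"
  using assms(1) by induction (use assms(2,3) in \<open>auto simp: adj_def\<close>)

lemma simple_graph_edge_in_vertices:
  assumes "simple_graph I E" and "{x, y} \<in> E"
  shows "x \<in> I" "y \<in> I"
  using assms by (auto simp: simple_graph_def doubleton_eq_iff)

theorem lemma5:
  fixes I :: "'a set" and E :: "'a set set"
    and Q :: "'a \<Rightarrow> 'a \<Rightarrow> real" and q :: "'a \<Rightarrow> real"
  assumes graph: "simple_graph I E"
    and conn: "connected_graph I E"
    and Q_nonneg: "\<forall>i\<in>I. \<forall>j\<in>I. Q i j \<ge> 0"
    and Q_edge: "\<forall>i\<in>I. \<forall>j\<in>I. (({i, j} \<in> E \<longrightarrow> Q i j > 0) \<and> ({i, j} \<notin> E \<longrightarrow> Q i j = 0))"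
    and q_nonneg: "\<forall>i\<in>I. q i \<ge> 0"
    and q_nonzero: "\<exists>i\<in>I. q i \<noteq> 0"
    and ji: "(j, i) \<in> msg_nodes E"
    and nontriv: "in_nontrivial_scc (msg_arcs E) (j, i)"
  shows "\<exists>h k. (h, k) \<in> msg_nodes E \<and> reachable (msg_arcs E) (j, i) (h, k) \<and> msg_alpha Q q (h, k) > 0"
proof -
  have cycle: "((j, i), (j, i)) \<in> (msg_arcs E)\<^sup>+"
    using nontriv by (rule in_nontrivial_scc_imp_trancl)
  obtain k where k: "k \<in> I" "q k > 0"
    using q_nonzero q_nonneg by (auto simp: less_le)
  have "{i, j} \<in> E"
    using ji by (simp add: msg_nodes_def)
  then have "i \<in> I"
    by (rule simple_graph_edge_in_vertices(1)[OF graph])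
  with conn k have "(i, k) \<in> (adj E)\<^sup>*"
    by (simp add: connected_graph_def)
  moreover have "i \<in> msg_receivers E (j, i)"
    by (auto simp: msg_receivers_def reachable_def)
  ultimately have "k \<in> msg_receivers E (j, i)"
    using msg_receivers_adj_closed[OF cycle] by (rule adj_rtrancl_closed)
  then obtain h where hk: "reachable (msg_arcs E) (j, i) (h, k)"
    by (auto simp: msg_receivers_def)
  have kh: "{k, h} \<in> E"
    using reachable_from_cycle_has_pred[OF cycle hk] by blast
  then have "h \<in> I"
    by (rule simple_graph_edge_in_vertices(2)[OF graph])
  with k kh Q_edge have "Q k h > 0"
    by blast
  with k have "msg_alpha Q q (h, k) > 0"
    by (simp add: msg_alpha_def)
  moreover have "(h, k) \<in> msg_nodes E"
    using kh by (simp add: msg_nodes_def)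
  ultimately show ?thesis
    using hk by blast
qed

end
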